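(* Let $d\ge1$ and let $\mu=\prod_{i=1}^d\mu_i$ be a product probability measure on $\mathbb{R}^d$, where for each $i$, $\mathrm{d}\mu_i(x_i)=\rho_i(|x_i|)\,\mathrm{d}x_i$ is a probability measure on $\mathbb{R}$ with $\rho_i:[0,\infty)\to(0,\infty)$ continuous. Let $A\subset\mathbb{R}^d$ be a bounded closed convex set such that whenever $x\in A$, the orthogonal projection of $x$ onto each coordinate hyperplane $\{x_i=0\}$ (i.e. the point obtained from $x$ by replacing its $i$-th coordinate with $0$), $i=1,\dots,d$, also belongs to $A$. Then for all positive constants $a_1,\dots,a_d$ and the ellipsoid $$B=\Big\{x\in\mathbb{R}^d:\ \tfrac{x_1^2}{a_1^2}+\cdots+\tfrac{x_d^2}{a_d^2}\le 1\Big\},$$ we have $\mu(A\cap B)\ge\mu(A)\,\mu(B)$. *)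

theory Defs
  imports "HOL-Analysis.Analysis"
begin

text \<open>The product measure on R^d (index type 'n, d = CARD('n)) whose i-th factor
  has Lebesgue density t \<mapsto> rho i |t|. Since lborel on real^'n is the product of the
  one-dimensional Lebesgue measures, this is the product of the factor measures.\<close>
definition prod_radial_measure :: "('n::finite \<Rightarrow> real \<Rightarrow> real) \<Rightarrow> (real ^ 'n) measure" where
  "prod_radial_measure rho = density lborel (\<lambda>x. ennreal (\<Prod>i\<in>UNIV. rho i \<bar>x $ i\<bar>))"

end

theory Submission
  imports Defs "HOL-Probability.Probability"
begin

text \<open>
  Transport the measure to the product space \<open>\<Pi>\<^sub>M b\<in>Basis. \<mu>\<^sub>b\<close> of its
  one-dimensional factors, each a symmetric probability measure on the line. There the
  indicators \<open>F\<close> of \<open>A\<close> and \<open>G\<close> of the ellipsoid are coordinatewise radially decreasing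
  (pulling one coordinate towards 0 keeps a point in the set: for \<open>A\<close> by convexity and
  the projection property, for the ellipsoid trivially), and \<open>G\<close> is also even in each
  coordinate. For such functions a Harris-type correlation inequality
  \<open>E[F] * E[G] \<le> E[F G]\<close> holds on any finite product of symmetric probability measures.
  It is proved by induction on the number of coordinates; the one-dimensional case is
  Chebyshev's integral inequality applied to \<open>g\<close> and the symmetrization of \<open>f\<close>.
\<close>

definition radially_decreasing :: "(real \<Rightarrow> real) \<Rightarrow> bool" where
  "radially_decreasing f \<longleftrightarrow> (\<forall>t l. 0 \<le> l \<and> l \<le> 1 \<longrightarrow> f t \<le> f (l * t))"

text \<open>The symmetrization \<open>f t + f (-t)\<close> of a radially decreasing function decreases in
  \<open>\<bar>t\<bar>\<close>: for \<open>\<bar>s\<bar> \<le> \<bar>t\<bar>\<close> the points \<open>s, -s\<close> are \<open>l * t, l * (-t)\<close> for some \<open>0 \<le> l \<le> 1\<close>.\<close>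

lemma radially_decreasing_symmetrization:
  assumes dec: "radially_decreasing f" and st: "\<bar>s\<bar> \<le> \<bar>t\<bar>"
  shows "f t + f (-t) \<le> f s + f (-s)"
proof (cases "t = 0")
  case True
  with st show ?thesis by simp
next
  case False
  define l where "l = \<bar>s\<bar> / \<bar>t\<bar>"
  have l: "0 \<le> l" "l \<le> 1" using st False by (auto simp: l_def)
  have "s = l * t \<or> s = l * (-t)"
    using False by (auto simp: l_def abs_if)
  then have "f s + f (-s) = f (l * t) + f (l * (-t))" by auto
  moreover have "f t \<le> f (l * t)" "f (-t) \<le> f (l * (-t))"
    using dec l unfolding radially_decreasing_def by blast+
  ultimately show ?thesis by linarith
qed

lemma even_radially_decreasing_mono:
  assumes "radially_decreasing g" "\<And>t. g (-t) = g t" "\<bar>s\<bar> \<le> \<bar>t\<bar>"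
  shows "g t \<le> g s"
  using radially_decreasing_symmetrization[OF assms(1,3)] assms(2) by simp

text \<open>All functions to be correlated take values in \<open>[0,1]\<close>; this keeps every integral finite.\<close>

definition unit_valued :: "('a \<Rightarrow> real) \<Rightarrow> bool" where
  "unit_valued f \<longleftrightarrow> (\<forall>x. 0 \<le> f x \<and> f x \<le> 1)"

lemma unit_valued_mult: "unit_valued f \<Longrightarrow> unit_valued g \<Longrightarrow> unit_valued (\<lambda>x. f x * g x)"
  by (simp add: unit_valued_def mult_le_one)

lemma unit_valued_indicator: "unit_valued (\<lambda>x. indicator S (h x) :: real)"
  by (simp add: unit_valued_def indicator_def)

lemma (in prob_space) integrable_unit_valued:
  "unit_valued f \<Longrightarrow> f \<in> borel_measurable M \<Longrightarrow> integrable M f"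
  by (rule integrable_const_bound[where B=1]) (auto simp: unit_valued_def)

text \<open>No measurability is needed: a non-integrable function has integral 0.\<close>

lemma (in prob_space) expectation_unit_valued:
  assumes "unit_valued f"
  shows "0 \<le> expectation f \<and> expectation f \<le> 1"
proof (cases "integrable M f")
  case True
  with assms show ?thesis
    by (auto intro!: integral_ge_const integral_le_const simp: unit_valued_def)
next
  case False
  then show ?thesis by (simp add: not_integrable_integral_eq)
qed

text \<open>The double integral of \<open>(p s - p t) * (g s - g t) \<ge> 0\<close> equals \<open>2 * (E[p g] - E[p] * E[g])\<close>.\<close>

lemma (in prob_space) chebyshev_integral_inequality:
  fixes p g :: "'a \<Rightarrow> real"
  assumes p: "integrable M p" and g: "integrable M g" and pg: "integrable M (\<lambda>x. p x * g x)"
    and similarly_ordered: "\<And>s t. s \<in> space M \<Longrightarrow> t \<in> space M \<Longrightarrow> 0 \<le> (p s - p t) * (g s - g t)"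
  shows "expectation p * expectation g \<le> expectation (\<lambda>x. p x * g x)"
proof -
  define Ep Eg Epg where "Ep = expectation p" and "Eg = expectation g"
    and "Epg = expectation (\<lambda>x. p x * g x)"
  have inner: "(\<integral>t. (p s - p t) * (g s - g t) \<partial>M) = p s * g s - p s * Eg - g s * Ep + Epg" for s
  proof -
    have "(\<lambda>t. (p s - p t) * (g s - g t)) = (\<lambda>t. p s * g s - p s * g t - g s * p t + p t * g t)"
      by (auto simp: algebra_simps)
    then show ?thesis using p g pg by (simp add: Ep_def Eg_def Epg_def prob_space)
  qed
  have "0 \<le> (\<integral>s. (\<integral>t. (p s - p t) * (g s - g t) \<partial>M) \<partial>M)"
    using similarly_ordered by (intro integral_nonneg_AE AE_I2) auto
  also have "\<dots> = 2 * Epg - 2 * Ep * Eg"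
    unfolding inner using p g pg by (simp add: Ep_def Eg_def Epg_def prob_space)
  finally show ?thesis by (simp add: Ep_def Eg_def Epg_def)
qed

locale symmetric_prob_space = prob_space M for M :: "real measure" +
  assumes sets_M: "sets M = sets borel"
    and uminus_invariant: "distr M borel uminus = M"
begin

lemma measurable_M_eq: "measurable M N = measurable borel N"
  by (rule measurable_cong_sets[OF sets_M refl])

lemma integral_reflect:
  fixes h :: "real \<Rightarrow> real"
  assumes "h \<in> borel_measurable M"
  shows "(\<integral>t. h (-t) \<partial>M) = (\<integral>t. h t \<partial>M)"
proof -
  have "(\<integral>t. h (-t) \<partial>M) = integral\<^sup>L (distr M borel uminus) h"
    by (rule integral_distr[symmetric]) (use assms in \<open>simp_all add: measurable_M_eq\<close>)
  then show ?thesis by (simp add: uminus_invariant)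
qed

lemma symmetrization_integrals:
  fixes f g :: "real \<Rightarrow> real"
  assumes f: "f \<in> borel_measurable M" "unit_valued f"
    and g: "g \<in> borel_measurable M" "unit_valued g" and g_even: "\<And>t. g (-t) = g t"
  shows "expectation (\<lambda>t. (f t + f (-t)) / 2) = expectation f"
    and "expectation (\<lambda>t. (f t + f (-t)) / 2 * g t) = expectation (\<lambda>t. f t * g t)"
proof -
  have f_refl: "(\<lambda>t. f (-t)) \<in> borel_measurable M" "unit_valued (\<lambda>t. f (-t))"
    using f by (simp_all add: measurable_M_eq unit_valued_def)
  have fg: "(\<lambda>t. f t * g t) \<in> borel_measurable M" "unit_valued (\<lambda>t. f t * g t)"
    using f g by (auto intro: unit_valued_mult)
  have fg_refl: "(\<lambda>t. f (-t) * g t) \<in> borel_measurable M" "unit_valued (\<lambda>t. f (-t) * g t)"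
    using f_refl g by (auto intro: unit_valued_mult)
  note integrable = integrable_unit_valued[OF f(2,1)] integrable_unit_valued[OF f_refl(2,1)]
    integrable_unit_valued[OF fg(2,1)] integrable_unit_valued[OF fg_refl(2,1)]
  show "expectation (\<lambda>t. (f t + f (-t)) / 2) = expectation f"
    using integrable integral_reflect[OF f(1)] by simp
  have "expectation (\<lambda>t. f (-t) * g t) = expectation (\<lambda>t. f t * g t)"
    using integral_reflect[OF fg(1)] g_even by simp
  then show "expectation (\<lambda>t. (f t + f (-t)) / 2 * g t) = expectation (\<lambda>t. f t * g t)"
    using integrable by (simp add: add_divide_distrib distrib_right)
qed

text \<open>The one-dimensional correlation inequality: the symmetrization \<open>p\<close> of \<open>f\<close> and \<open>g\<close> both
  decrease in \<open>\<bar>t\<bar>\<close>, so they are similarly ordered and Chebyshev applies to them.\<close>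

lemma correlation_inequality:
  fixes f g :: "real \<Rightarrow> real"
  assumes f: "f \<in> borel_measurable M" "unit_valued f" "radially_decreasing f"
    and g: "g \<in> borel_measurable M" "unit_valued g" "radially_decreasing g"
    and g_even: "\<And>t. g (-t) = g t"
  shows "expectation f * expectation g \<le> expectation (\<lambda>t. f t * g t)"
proof -
  define p where "p t = (f t + f (-t)) / 2" for t
  have p_meas: "p \<in> borel_measurable M"
    using f(1) unfolding p_def[abs_def] by (simp add: measurable_M_eq)
  have p_unit: "unit_valued p"
    unfolding unit_valued_def p_def
  proof
    fix t
    have "0 \<le> f t" "f t \<le> 1" "0 \<le> f (-t)" "f (-t) \<le> 1"
      using f(2) by (simp_all add: unit_valued_def)
    then show "0 \<le> (f t + f (-t)) / 2 \<and> (f t + f (-t)) / 2 \<le> 1" by simp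
  qed
  have ordered: "p t \<le> p s \<and> g t \<le> g s" if "\<bar>s\<bar> \<le> \<bar>t\<bar>" for s t
    using radially_decreasing_symmetrization[OF f(3) that]
      even_radially_decreasing_mono[OF g(3) g_even that] by (simp add: p_def)
  have "0 \<le> (p s - p t) * (g s - g t)" for s t
    using ordered[of s t] ordered[of t s]
    by (cases "\<bar>s\<bar> \<le> \<bar>t\<bar>") (auto intro: mult_nonneg_nonneg mult_nonpos_nonpos)
  then have "expectation p * expectation g \<le> expectation (\<lambda>t. p t * g t)"
    using p_meas p_unit g by (intro chebyshev_integral_inequality integrable_unit_valued unit_valued_mult) auto
  moreover have "expectation p = expectation f"
    "expectation (\<lambda>t. p t * g t) = expectation (\<lambda>t. f t * g t)"
    unfolding p_def[abs_def] by (rule symmetrization_integrals[OF f(1,2) g(1,2) g_even])+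
  ultimately show ?thesis by simp
qed

end

definition coord_decreasing :: "'i set \<Rightarrow> (('i \<Rightarrow> real) \<Rightarrow> real) \<Rightarrow> bool" where
  "coord_decreasing I F \<longleftrightarrow> (\<forall>x\<in>extensional I. \<forall>i\<in>I. radially_decreasing (\<lambda>t. F (x(i := t))))"

definition coord_even :: "'i set \<Rightarrow> (('i \<Rightarrow> real) \<Rightarrow> real) \<Rightarrow> bool" where
  "coord_even I F \<longleftrightarrow> (\<forall>x\<in>extensional I. \<forall>i\<in>I. \<forall>t. F (x(i := -t)) = F (x(i := t)))"

locale symmetric_product_space =
  fixes M :: "'i \<Rightarrow> real measure"
  assumes symmetric_factor: "\<And>i. symmetric_prob_space (M i)"
begin

lemma prob_space_factor: "prob_space (M i)"
  using symmetric_factor[of i] by (simp add: symmetric_prob_space_def)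

lemma space_factor: "space (M i) = UNIV"
  using sets_eq_imp_space_eq[OF symmetric_prob_space.sets_M[OF symmetric_factor]] by simp

end

sublocale symmetric_product_space \<subseteq> product_sigma_finite M
  by (simp add: product_sigma_finite_def prob_space_factor prob_space_imp_sigma_finite)

context symmetric_product_space
begin

lemma space_PiM_extensional: "space (PiM I M) = extensional I"
  by (auto simp: space_PiM space_factor PiE_def)

lemma prob_space_PiM_factors: "prob_space (PiM I M)"
  by (rule prob_space_PiM) (rule prob_space_factor)

definition coord_average :: "'i \<Rightarrow> (('i \<Rightarrow> real) \<Rightarrow> real) \<Rightarrow> ('i \<Rightarrow> real) \<Rightarrow> real" where
  "coord_average i F x = (\<integral>t. F (x(i := t)) \<partial>M i)"

lemma extensional_update_insert: "x \<in> extensional I \<Longrightarrow> x(i := t) \<in> extensional (insert i I)"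
  by (auto simp: extensional_def)

lemma coord_section_integrable:
  assumes F: "F \<in> borel_measurable (PiM (insert i I) M)" "unit_valued F"
    and i: "i \<notin> I" and x: "x \<in> extensional I"
  shows "integrable (M i) (\<lambda>t. F (x(i := t)))"
proof -
  have "(\<lambda>t. x(i := t)) \<in> measurable (M i) (PiM (insert i I) M)"
    using i x by (intro measurable_component_update) (simp_all add: space_PiM_extensional)
  from measurable_comp[OF this F(1)]
  have "(\<lambda>t. F (x(i := t))) \<in> borel_measurable (M i)" by (simp add: comp_def)
  moreover have "unit_valued (\<lambda>t. F (x(i := t)))"
    using F(2) by (simp add: unit_valued_def)
  ultimately show ?thesis
    by (rule prob_space.integrable_unit_valued[OF prob_space_factor, rotated])
qed

lemma coord_average_measurable:
  assumes "F \<in> borel_measurable (PiM (insert i I) M)"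
  shows "coord_average i F \<in> borel_measurable (PiM I M)"
proof -
  have "(\<lambda>(x, t). F (x(i := t))) \<in> borel_measurable (PiM I M \<Otimes>\<^sub>M M i)"
    using measurable_comp[OF measurable_add_dim assms] by (simp add: comp_def case_prod_beta')
  then show ?thesis unfolding coord_average_def
    by (rule sigma_finite_measure.borel_measurable_lebesgue_integral[OF sigma_finite_measures])
qed

lemma coord_average_unit_valued: "unit_valued F \<Longrightarrow> unit_valued (coord_average i F)"
  using prob_space.expectation_unit_valued[OF prob_space_factor]
  by (simp add: unit_valued_def coord_average_def)

lemma integral_insert_coord_average:
  assumes "finite I" "i \<notin> I" "F \<in> borel_measurable (PiM (insert i I) M)" "unit_valued F"
  shows "integral\<^sup>L (PiM (insert i I) M) F = integral\<^sup>L (PiM I M) (coord_average i F)"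
  unfolding coord_average_def
  by (rule product_integral_insert[OF assms(1,2)])
    (rule prob_space.integrable_unit_valued[OF prob_space_PiM_factors assms(4,3)])

lemma coord_average_decreasing:
  assumes F: "F \<in> borel_measurable (PiM (insert i I) M)" "unit_valued F"
    "coord_decreasing (insert i I) F" and i: "i \<notin> I"
  shows "coord_decreasing I (coord_average i F)"
  unfolding coord_decreasing_def radially_decreasing_def
proof (intro ballI allI impI)
  fix x :: "'i \<Rightarrow> real" and j and s l :: real
  assume x: "x \<in> extensional I" and j: "j \<in> I" and l: "0 \<le> l \<and> l \<le> 1"
  have x_upd: "x(j := v) \<in> extensional I" for v
    using x j by (auto simp: extensional_def)
  show "coord_average i F (x(j := s)) \<le> coord_average i F (x(j := l * s))"
    unfolding coord_average_def
  proof (rule integral_mono)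
    show "integrable (M i) (\<lambda>t. F (x(j := s, i := t)))"
      "integrable (M i) (\<lambda>t. F (x(j := l * s, i := t)))"
      by (rule coord_section_integrable[OF F(1,2) i x_upd])+
    fix t
    have "radially_decreasing (\<lambda>v. F (x(i := t, j := v)))"
      using F(3) extensional_update_insert[OF x] j by (simp add: coord_decreasing_def)
    moreover have "j \<noteq> i" using i j by auto
    ultimately show "F (x(j := s, i := t)) \<le> F (x(j := l * s, i := t))"
      using l by (simp add: radially_decreasing_def fun_upd_twist)
  qed
qed

lemma coord_average_even:
  assumes G: "coord_even (insert i I) G" and i: "i \<notin> I"
  shows "coord_even I (coord_average i G)"
  unfolding coord_even_def coord_average_def
proof (intro ballI allI Bochner_Integration.integral_cong[OF refl])
  fix x :: "'i \<Rightarrow> real" and j and s t :: real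
  assume x: "x \<in> extensional I" and j: "j \<in> I"
  have "j \<noteq> i" using i j by auto
  then show "G (x(j := - s, i := t)) = G (x(j := s, i := t))"
    using G extensional_update_insert[OF x] j by (simp add: coord_even_def fun_upd_twist)
qed

lemma coord_average_correlation:
  assumes F: "F \<in> borel_measurable (PiM (insert i I) M)" "unit_valued F"
      "coord_decreasing (insert i I) F"
    and G: "G \<in> borel_measurable (PiM (insert i I) M)" "unit_valued G"
      "coord_decreasing (insert i I) G" "coord_even (insert i I) G"
    and i: "i \<notin> I" and x: "x \<in> extensional I"
  shows "coord_average i F x * coord_average i G x \<le> coord_average i (\<lambda>y. F y * G y) x"
  unfolding coord_average_def
proof (rule symmetric_prob_space.correlation_inequality[OF symmetric_factor])
  have x': "x \<in> extensional (insert i I)"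
    using x by (auto simp: extensional_def)
  show "(\<lambda>t. F (x(i := t))) \<in> borel_measurable (M i)" "(\<lambda>t. G (x(i := t))) \<in> borel_measurable (M i)"
    using coord_section_integrable[OF F(1,2) i x] coord_section_integrable[OF G(1,2) i x] by auto
  show "unit_valued (\<lambda>t. F (x(i := t)))" "unit_valued (\<lambda>t. G (x(i := t)))"
    using F(2) G(2) by (simp_all add: unit_valued_def)
  show "radially_decreasing (\<lambda>t. F (x(i := t)))" "radially_decreasing (\<lambda>t. G (x(i := t)))"
    using F(3) G(3) x' by (simp_all add: coord_decreasing_def)
  show "G (x(i := - t)) = G (x(i := t))" for t
    using G(4) x' by (simp add: coord_even_def)
qed

text \<open>The correlation inequality on a finite product, by induction on the index set: integrate
  out one coordinate, apply the induction hypothesis to the averages, then the one-dimensional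
  inequality in the integrated coordinate.\<close>

theorem correlation_inequality_product:
  assumes "finite I"
    and "F \<in> borel_measurable (PiM I M)" "unit_valued F" "coord_decreasing I F"
    and "G \<in> borel_measurable (PiM I M)" "unit_valued G" "coord_decreasing I G" "coord_even I G"
  shows "(\<integral>x. F x \<partial>PiM I M) * (\<integral>x. G x \<partial>PiM I M) \<le> (\<integral>x. F x * G x \<partial>PiM I M)"
  using assms
proof (induction I arbitrary: F G rule: finite_induct)
  case empty
  show ?case by (simp add: PiM_empty lebesgue_integral_count_space_finite)
next
  case (insert i I)
  note F = insert.prems(1-3) and G = insert.prems(4-7)
  have FG: "(\<lambda>x. F x * G x) \<in> borel_measurable (PiM (insert i I) M)" "unit_valued (\<lambda>x. F x * G x)"
    using F G by (auto intro: unit_valued_mult)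
  let ?avgF = "coord_average i F" and ?avgG = "coord_average i G"
  have "(\<integral>x. F x \<partial>PiM (insert i I) M) * (\<integral>x. G x \<partial>PiM (insert i I) M)
      = (\<integral>x. ?avgF x \<partial>PiM I M) * (\<integral>x. ?avgG x \<partial>PiM I M)"
    using F G insert.hyps by (simp add: integral_insert_coord_average)
  also have "\<dots> \<le> (\<integral>x. ?avgF x * ?avgG x \<partial>PiM I M)"
    using F G insert.hyps
    by (intro insert.IH coord_average_measurable coord_average_unit_valued
        coord_average_decreasing coord_average_even)
  also have "\<dots> \<le> (\<integral>x. coord_average i (\<lambda>y. F y * G y) x \<partial>PiM I M)"
  proof (rule integral_mono)
    interpret PI: prob_space "PiM I M" by (rule prob_space_PiM_factors)
    show "integrable (PiM I M) (\<lambda>x. ?avgF x * ?avgG x)"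
      using F G by (intro PI.integrable_unit_valued unit_valued_mult coord_average_unit_valued
          borel_measurable_times coord_average_measurable)
    show "integrable (PiM I M) (coord_average i (\<lambda>y. F y * G y))"
      using FG by (intro PI.integrable_unit_valued coord_average_unit_valued coord_average_measurable)
    show "?avgF x * ?avgG x \<le> coord_average i (\<lambda>y. F y * G y) x" if "x \<in> space (PiM I M)" for x
      using F G insert.hyps that
      by (intro coord_average_correlation) (simp_all add: space_PiM_extensional)
  qed
  also have "\<dots> = (\<integral>x. F x * G x \<partial>PiM (insert i I) M)"
    using FG insert.hyps by (simp add: integral_insert_coord_average)
  finally show ?case .
qed

end

lemma symmetric_prob_space_even_density:
  fixes g :: "real \<Rightarrow> ennreal"
  assumes g: "g \<in> borel_measurable borel" and even: "\<And>t. g (-t) = g t"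
    and prob: "emeasure (density lborel g) UNIV = 1"
  shows "symmetric_prob_space (density lborel g)"
proof -
  have "distr (density lborel g) borel uminus = distr (density lborel (\<lambda>t. g (- t))) borel uminus"
    using even by simp
  also have "\<dots> = density (distr lborel borel uminus) g"
    using g by (intro density_distr[symmetric]) auto
  finally have "distr (density lborel g) borel uminus = density lborel g"
    by (simp add: lborel_distr_uminus)
  then show ?thesis
    by (intro symmetric_prob_space.intro symmetric_prob_space_axioms.intro prob_spaceI)
      (simp_all add: prob)
qed

lemma indicator_PiE_prod:
  assumes "finite I" "x \<in> extensional I"
  shows "(indicator (PiE I A) x :: ennreal) = (\<Prod>i\<in>I. indicator (A i) (x i))"
proof (cases "x \<in> PiE I A")
  case True
  then show ?thesis by (auto simp: indicator_def PiE_def intro!: prod.neutral)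
next
  case False
  then obtain i where "i \<in> I" "x i \<notin> A i" using assms(2) by (auto simp: PiE_def)
  then show ?thesis using assms(1) False by (auto intro!: prod_zero bexI[of _ i])
qed

lemma PiM_density_lborel:
  fixes f :: "'i \<Rightarrow> real \<Rightarrow> real"
  assumes I: "finite I" and f: "\<And>i. f i \<in> borel_measurable borel" "\<And>i t. 0 \<le> f i t"
  shows "PiM I (\<lambda>i. density lborel (\<lambda>t. ennreal (f i t)))
    = density (PiM I (\<lambda>_. lborel)) (\<lambda>x. ennreal (\<Prod>i\<in>I. f i (x i)))"
    (is "PiM I ?M = density ?L ?h")
proof -
  interpret product_sigma_finite ?M
    using f by (simp add: product_sigma_finite_def
        sigma_finite_measure.sigma_finite_iff_density_finite[OF sigma_finite_lborel])
  interpret L: product_sigma_finite "\<lambda>_::'i. lborel :: real measure"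
    by (simp add: product_sigma_finite_def sigma_finite_lborel)
  have h[measurable]: "?h \<in> borel_measurable ?L"
    using f(1) by measurable
  show ?thesis
  proof (rule PiM_eqI[symmetric, OF I])
    show "sets (density ?L ?h) = sets (PiM I ?M)"
      unfolding sets_density by (rule sets_PiM_cong) simp_all
    fix A assume A: "\<And>i. i \<in> I \<Longrightarrow> A i \<in> sets (?M i)"
    have "emeasure (density ?L ?h) (PiE I A) = (\<integral>\<^sup>+x. ?h x * indicator (PiE I A) x \<partial>?L)"
      using A by (intro emeasure_density h sets_PiM_I_finite I) auto
    also have "\<dots> = (\<integral>\<^sup>+x. (\<Prod>i\<in>I. ennreal (f i (x i)) * indicator (A i) (x i)) \<partial>?L)"
    proof (rule nn_integral_cong)
      fix x assume "x \<in> space ?L"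
      then have "x \<in> extensional I" by (simp add: space_PiM PiE_def)
      then show "?h x * indicator (PiE I A) x = (\<Prod>i\<in>I. ennreal (f i (x i)) * indicator (A i) (x i))"
        using f(2) by (simp add: indicator_PiE_prod[OF I] prod_ennreal prod.distrib)
    qed
    also have "\<dots> = (\<Prod>i\<in>I. \<integral>\<^sup>+t. ennreal (f i t) * indicator (A i) t \<partial>lborel)"
      using A f(1) by (intro L.product_nn_integral_prod I) auto
    also have "\<dots> = (\<Prod>i\<in>I. emeasure (?M i) (A i))"
      using A f by (intro prod.cong refl emeasure_density[symmetric]) auto
    finally show "emeasure (density ?L ?h) (PiE I A) = (\<Prod>i\<in>I. emeasure (?M i) (A i))" .
  qed
qed

text \<open>Lebesgue measure on \<open>real^'n\<close> is the image of the product measure over \<open>Basis\<close> under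
  \<open>vec_of_basis_coords\<close>; \<open>basis_index\<close> recovers the coordinate of a standard basis vector.\<close>

definition vec_of_basis_coords :: "(real^'n \<Rightarrow> real) \<Rightarrow> real^'n::finite" where
  "vec_of_basis_coords y = (\<Sum>b\<in>Basis. y b *\<^sub>R b)"

definition basis_index :: "real^'n \<Rightarrow> 'n::finite" where
  "basis_index b = (THE i. axis i 1 = b)"

lemma Basis_vec_range: "(Basis :: (real^'n::finite) set) = range (\<lambda>i. axis i 1)"
  by (auto simp: Basis_vec_def)

lemma basis_index_axis: "basis_index (axis i 1 :: real^'n::finite) = i"
  unfolding basis_index_def by (rule the_equality) (simp_all add: axis_eq_axis)

lemma vec_of_basis_coords_nth: "vec_of_basis_coords y $ j = y (axis j 1)"
proof -
  have "vec_of_basis_coords y $ j = (\<Sum>b\<in>Basis. y b * (b \<bullet> axis j 1))"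
    by (simp add: vec_of_basis_coords_def cart_eq_inner_axis inner_sum_left)
  also have "\<dots> = (\<Sum>b\<in>Basis. if b = axis j 1 then y b else 0)"
    by (intro sum.cong refl) (auto simp: inner_Basis)
  finally show ?thesis by simp
qed

lemma prod_Basis_reindex:
  "(\<Prod>i\<in>UNIV. f i (y (axis i 1))) = (\<Prod>b\<in>(Basis :: (real^'n::finite) set). f (basis_index b) (y b))"
proof -
  have "inj (\<lambda>i::'n. axis i (1::real))" by (auto simp: inj_def axis_eq_axis)
  then show ?thesis unfolding Basis_vec_range by (simp add: prod.reindex basis_index_axis)
qed

lemma measurable_vec_of_basis_coords:
  assumes "\<And>b. sets (M b) = sets borel"
  shows "vec_of_basis_coords \<in> borel_measurable (PiM (Basis :: (real^'n::finite) set) M)"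
proof -
  have "sets (PiM (Basis :: (real^'n) set) M) = sets (PiM Basis (\<lambda>_. lborel))"
    using assms by (intro sets_PiM_cong) simp_all
  moreover have "vec_of_basis_coords \<in> borel_measurable (PiM (Basis :: (real^'n) set) (\<lambda>_. lborel))"
    unfolding vec_of_basis_coords_def by measurable
  ultimately show ?thesis by (subst measurable_cong_sets) auto
qed

lemma prod_radial_measure_eq_distr:
  fixes rho :: "'n::finite \<Rightarrow> real \<Rightarrow> real"
  assumes meas: "\<And>i. (\<lambda>t. rho i \<bar>t\<bar>) \<in> borel_measurable borel"
    and nonneg: "\<And>i t. 0 \<le> t \<Longrightarrow> 0 \<le> rho i t"
  shows "prod_radial_measure rho
    = distr (PiM Basis (\<lambda>b. density lborel (\<lambda>t. ennreal (rho (basis_index b) \<bar>t\<bar>)))) borel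
        vec_of_basis_coords"
proof -
  let ?L = "PiM (Basis :: (real^'n) set) (\<lambda>_. lborel)"
  define h where "h x = ennreal (\<Prod>i\<in>UNIV. rho i \<bar>x $ i\<bar>)" for x :: "real^'n"
  have [measurable]: "h \<in> borel_measurable borel"
    using meas unfolding h_def by measurable
  have vec_meas[measurable]: "vec_of_basis_coords \<in> measurable ?L borel"
    by (rule measurable_vec_of_basis_coords) simp
  have "prod_radial_measure rho = density (distr ?L borel vec_of_basis_coords) h"
    unfolding prod_radial_measure_def h_def vec_of_basis_coords_def[abs_def] lborel_eq[symmetric] ..
  also have "\<dots> = distr (density ?L (\<lambda>y. h (vec_of_basis_coords y))) borel vec_of_basis_coords"
    by (rule density_distr) measurable
  also have "(\<lambda>y. h (vec_of_basis_coords y))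
      = (\<lambda>y. ennreal (\<Prod>b\<in>Basis. rho (basis_index b) \<bar>y b\<bar>))"
    unfolding h_def vec_of_basis_coords_nth using prod_Basis_reindex[of "\<lambda>i t. rho i \<bar>t\<bar>"] by simp
  also have "density ?L \<dots> = PiM Basis (\<lambda>b. density lborel (\<lambda>t. ennreal (rho (basis_index b) \<bar>t\<bar>)))"
    using meas nonneg by (intro PiM_density_lborel[symmetric]) auto
  finally show ?thesis .
qed

definition update_coord :: "real^'n \<Rightarrow> 'n::finite \<Rightarrow> real \<Rightarrow> real^'n" where
  "update_coord x k t = (\<chi> j. if j = k then t else x $ j)"

definition coord_star_shaped :: "(real^'n::finite) set \<Rightarrow> bool" where
  "coord_star_shaped S \<longleftrightarrow> (\<forall>x\<in>S. \<forall>k l. 0 \<le> l \<and> l \<le> 1 \<longrightarrow> update_coord x k (l * x $ k) \<in> S)"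

definition coord_symmetric :: "(real^'n::finite) set \<Rightarrow> bool" where
  "coord_symmetric S \<longleftrightarrow> (\<forall>x\<in>S. \<forall>k. update_coord x k (- x $ k) \<in> S)"

lemma update_coord_nth: "update_coord x k t $ j = (if j = k then t else x $ j)"
  by (simp add: update_coord_def)

lemma update_coord_update_coord [simp]: "update_coord (update_coord x k s) k t = update_coord x k t"
  by (simp add: update_coord_def vec_eq_iff)

text \<open>Pulling a coordinate of \<open>x\<close> towards 0 gives a convex combination of \<open>x\<close> and its
  projection onto the coordinate hyperplane.\<close>

lemma convex_coord_star_shaped:
  assumes convex: "convex A"
    and proj: "\<And>x k. x \<in> A \<Longrightarrow> (\<chi> j. if j = k then 0 else x $ j) \<in> A"
  shows "coord_star_shaped A"
  unfolding coord_star_shaped_def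
proof (intro ballI allI impI)
  fix x k and l :: real assume x: "x \<in> A" and l: "0 \<le> l \<and> l \<le> 1"
  have "update_coord x k (l * x $ k) = l *\<^sub>R x + (1 - l) *\<^sub>R update_coord x k 0"
    by (simp add: update_coord_def vec_eq_iff algebra_simps)
  moreover have "update_coord x k 0 \<in> A"
    using proj[OF x] by (simp add: update_coord_def)
  ultimately show "update_coord x k (l * x $ k) \<in> A"
    using convexD[OF convex x, of _ l "1 - l"] l by simp
qed

text \<open>Shrinking or reflecting one coordinate does not increase the ellipsoid's quadratic form
  (no sign condition on the semi-axes is needed).\<close>

lemma ellipsoid_coord_star_shaped:
  fixes a :: "'n::finite \<Rightarrow> real"
  shows "coord_star_shaped {x. (\<Sum>i\<in>UNIV. (x $ i)^2 / (a i)^2) \<le> 1}"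
  unfolding coord_star_shaped_def
proof (intro ballI allI impI)
  fix x k and l :: real assume x: "x \<in> {x. (\<Sum>i\<in>UNIV. (x $ i)^2 / (a i)^2) \<le> 1}"
    and l: "0 \<le> l \<and> l \<le> 1"
  have "(l * v)^2 \<le> v^2" for v :: real
    using l by (simp add: power_mult_distrib mult_left_le_one_le power_le_one)
  then have "(\<Sum>i\<in>UNIV. (update_coord x k (l * x $ k) $ i)^2 / (a i)^2) \<le> (\<Sum>i\<in>UNIV. (x $ i)^2 / (a i)^2)"
    by (intro sum_mono divide_right_mono) (simp_all add: update_coord_nth)
  with x show "update_coord x k (l * x $ k) \<in> {x. (\<Sum>i\<in>UNIV. (x $ i)^2 / (a i)^2) \<le> 1}"
    by simp
qed

lemma ellipsoid_coord_symmetric: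
  fixes a :: "'n::finite \<Rightarrow> real"
  shows "coord_symmetric {x. (\<Sum>i\<in>UNIV. (x $ i)^2 / (a i)^2) \<le> 1}"
  unfolding coord_symmetric_def
proof (intro ballI allI)
  fix x k assume "x \<in> {x. (\<Sum>i\<in>UNIV. (x $ i)^2 / (a i)^2) \<le> 1}"
  moreover have "(\<Sum>i\<in>UNIV. (update_coord x k (- x $ k) $ i)^2 / (a i)^2) = (\<Sum>i\<in>UNIV. (x $ i)^2 / (a i)^2)"
    by (intro sum.cong refl) (simp add: update_coord_nth)
  ultimately show "update_coord x k (- x $ k) \<in> {x. (\<Sum>i\<in>UNIV. (x $ i)^2 / (a i)^2) \<le> 1}"
    by simp
qed

lemma vec_of_basis_coords_update:
  "vec_of_basis_coords (y(axis k 1 := t)) = update_coord (vec_of_basis_coords y) k t"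
  unfolding vec_eq_iff by (simp add: vec_of_basis_coords_nth update_coord_nth axis_eq_axis)

lemma coord_decreasing_indicator:
  fixes S :: "(real^'n::finite) set"
  assumes "coord_star_shaped S"
  shows "coord_decreasing Basis (\<lambda>y. indicator S (vec_of_basis_coords y) :: real)"
  unfolding coord_decreasing_def radially_decreasing_def
proof (intro ballI allI impI)
  fix y :: "real^'n \<Rightarrow> real" and b :: "real^'n" and t l :: real
  assume b: "b \<in> Basis" and l: "0 \<le> l \<and> l \<le> 1"
  obtain k where k: "b = axis k 1" using b unfolding Basis_vec_range by auto
  let ?v = "vec_of_basis_coords y"
  have "update_coord ?v k (l * t) \<in> S" if "update_coord ?v k t \<in> S"
  proof -
    have "update_coord (update_coord ?v k t) k (l * update_coord ?v k t $ k) \<in> S"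
      using assms that l unfolding coord_star_shaped_def by blast
    then show ?thesis by (simp add: update_coord_nth)
  qed
  then show "indicator S (vec_of_basis_coords (y(b := t)))
      \<le> (indicator S (vec_of_basis_coords (y(b := l * t))) :: real)"
    by (simp add: k vec_of_basis_coords_update indicator_def)
qed

lemma coord_even_indicator:
  fixes S :: "(real^'n::finite) set"
  assumes "coord_symmetric S"
  shows "coord_even Basis (\<lambda>y. indicator S (vec_of_basis_coords y) :: real)"
  unfolding coord_even_def
proof (intro ballI allI)
  fix y :: "real^'n \<Rightarrow> real" and b :: "real^'n" and t :: real assume b: "b \<in> Basis"
  obtain k where k: "b = axis k 1" using b unfolding Basis_vec_range by auto
  let ?v = "vec_of_basis_coords y"
  have flip: "update_coord ?v k (- s) \<in> S" if "update_coord ?v k s \<in> S" for s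
  proof -
    have "update_coord (update_coord ?v k s) k (- update_coord ?v k s $ k) \<in> S"
      using assms that unfolding coord_symmetric_def by blast
    then show ?thesis by (simp add: update_coord_nth)
  qed
  have "update_coord ?v k (- t) \<in> S \<longleftrightarrow> update_coord ?v k t \<in> S"
    using flip[of t] flip[of "- t"] by auto
  then show "indicator S (vec_of_basis_coords (y(b := - t)))
      = (indicator S (vec_of_basis_coords (y(b := t))) :: real)"
    by (simp add: k vec_of_basis_coords_update indicator_def)
qed

theorem star_shaped_sets_correlation:
  fixes M :: "real^'n::finite \<Rightarrow> real measure" and S T :: "(real^'n) set"
  assumes M: "\<And>b. symmetric_prob_space (M b)"
    and S: "S \<in> sets borel" "coord_star_shaped S"
    and T: "T \<in> sets borel" "coord_star_shaped T" "coord_symmetric T"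
  defines "\<mu> \<equiv> distr (PiM Basis M) borel vec_of_basis_coords"
  shows "measure \<mu> S * measure \<mu> T \<le> measure \<mu> (S \<inter> T)"
proof -
  interpret symmetric_product_space M by (rule symmetric_product_space.intro[OF M])
  have vec_meas: "vec_of_basis_coords \<in> borel_measurable (PiM Basis M)"
    by (rule measurable_vec_of_basis_coords) (rule symmetric_prob_space.sets_M[OF M])
  have measure_eq: "measure \<mu> U = (\<integral>y. indicator U (vec_of_basis_coords y) \<partial>PiM Basis M)"
    if "U \<in> sets borel" for U
    using that by (simp add: \<mu>_def integral_distr[OF vec_meas, symmetric])
  have "(\<integral>y. indicator S (vec_of_basis_coords y) \<partial>PiM Basis M)
      * (\<integral>y. indicator T (vec_of_basis_coords y) \<partial>PiM Basis M :: real)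
      \<le> (\<integral>y. indicator S (vec_of_basis_coords y) * indicator T (vec_of_basis_coords y) \<partial>PiM Basis M)"
  proof (rule correlation_inequality_product)
    show "(\<lambda>y. indicator S (vec_of_basis_coords y)) \<in> borel_measurable (PiM Basis M)"
      "(\<lambda>y. indicator T (vec_of_basis_coords y)) \<in> borel_measurable (PiM Basis M)"
      using S(1) T(1) by (auto intro: measurable_compose[OF vec_meas])
  qed (simp_all add: unit_valued_indicator coord_decreasing_indicator coord_even_indicator S T)
  then show ?thesis
    using S(1) T(1) by (simp add: measure_eq indicator_inter_arith)
qed

theorem theorem1p2:
  fixes rho :: "'n::finite \<Rightarrow> real \<Rightarrow> real"
    and A :: "(real ^ 'n) set"
    and a :: "'n \<Rightarrow> real"
  assumes rho_cont: "\<And>i. continuous_on {0..} (rho i)"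
    and rho_pos: "\<And>i t. t \<ge> 0 \<Longrightarrow> rho i t > 0"
    and rho_prob: "\<And>i. emeasure (density lborel (\<lambda>t. ennreal (rho i \<bar>t\<bar>))) UNIV = 1"
    and A_bounded: "bounded A" and A_closed: "closed A" and A_convex: "convex A"
    and A_proj: "\<And>x i. x \<in> A \<Longrightarrow> (\<chi> j. if j = i then 0 else x $ j) \<in> A"
    and a_pos: "\<And>i. a i > 0"
  shows "measure (prod_radial_measure rho) (A \<inter> {x. (\<Sum>i\<in>UNIV. (x $ i)^2 / (a i)^2) \<le> 1})
         \<ge> measure (prod_radial_measure rho) A
           * measure (prod_radial_measure rho) {x. (\<Sum>i\<in>UNIV. (x $ i)^2 / (a i)^2) \<le> 1}"
proof -
  define M where "M b = density lborel (\<lambda>t. ennreal (rho (basis_index b) \<bar>t\<bar>))" for b :: "real^'n"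
  have rho_meas: "(\<lambda>t. rho i \<bar>t\<bar>) \<in> borel_measurable borel" for i
    by (intro borel_measurable_continuous_onI continuous_on_compose2[OF rho_cont]
        continuous_intros) auto
  have symmetric: "symmetric_prob_space (M b)" for b
    unfolding M_def using rho_meas rho_prob by (intro symmetric_prob_space_even_density) auto
  have law: "prod_radial_measure rho = distr (PiM Basis M) borel vec_of_basis_coords"
    unfolding M_def using rho_meas rho_pos
    by (intro prod_radial_measure_eq_distr) (auto intro: less_imp_le)
  have "A \<in> sets borel" using A_closed by (rule borel_closed)
  moreover have "{x::real^'n. (\<Sum>i\<in>UNIV. (x $ i)^2 / (a i)^2) \<le> 1} \<in> sets borel"
    by measurable
  ultimately show ?thesis
    unfolding law
    by (intro star_shaped_sets_correlation symmetric convex_coord_star_shaped A_convex A_proj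
        ellipsoid_coord_star_shaped ellipsoid_coord_symmetric)
qed

end
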